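(* Let $\Omega$ be either $\mathbb R^n$ or a cube in $\mathbb R^n$, let $r\ge1$, and let $f$ be measurable on $\Omega$. The following are equivalent: (i) $f\in\mathcal M^r_{A_1}(\Omega)$; (ii) $M_\Omega(|f|^r)\in\mathcal M_{A_1}(\Omega)$; (iii) $M_\Omega f\in\mathcal M^r_{A_1}(\Omega)$.
   Context: Cubes have sides parallel to the axes. A weight on a cube $Q$ is an a.e. positive function in $L^1(Q)$; a weight on $\mathbb R^n$ is an a.e. positive function in $L^1_{\mathrm{loc}}(\mathbb R^n)$. $M_\Omega g(x)=\sup\{|Q'|^{-1}\int_{Q'}|g|: Q'\subset\Omega \text{ a cube}, x\in Q'\}$. $A_1(\Omega)$ is the class of weights $w$ on $\Omega$ with $M_\Omega w\le Cw$ a.e. on $\Omega$ for some constant $C$. For $0<r<\infty$, $\mathcal M^r_{A_1}(\Omega)$ is the set of measurable $g$ on $\Omega$ for which there exists $w\in A_1(\Omega)$ with $|g|^r\le w$ a.e. on $\Omega$, and $\mathcal M_{A_1}(\Omega)=\mathcal M^1_{A_1}(\Omega)$. *)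

theory Defs
  imports "HOL-Analysis.Analysis"
begin

definition is_cube :: "'a::euclidean_space set \<Rightarrow> bool" where
  "is_cube Q \<longleftrightarrow> (\<exists>a l. l > 0 \<and> Q = cbox a (a + l *\<^sub>R One))"

definition maxfun :: "'a::euclidean_space set \<Rightarrow> ('a \<Rightarrow> real) \<Rightarrow> 'a \<Rightarrow> ennreal" where
  "maxfun \<Omega> g x =
     (SUP Q \<in> {Q. is_cube Q \<and> Q \<subseteq> \<Omega> \<and> x \<in> Q}.
        (\<integral>\<^sup>+ y \<in> Q. ennreal \<bar>g y\<bar> \<partial>lebesgue) / emeasure lebesgue Q)"

text \<open>Weights on Omega (Omega = R^n or a cube): a.e. positive and integrable on every cube
  contained in Omega (for a cube Omega this is L^1(Omega); for R^n it is L^1_loc).\<close>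
definition weight :: "'a::euclidean_space set \<Rightarrow> ('a \<Rightarrow> real) \<Rightarrow> bool" where
  "weight \<Omega> w \<longleftrightarrow>
     (AE x in lebesgue. x \<in> \<Omega> \<longrightarrow> w x > 0) \<and>
     (\<forall>Q. is_cube Q \<and> Q \<subseteq> \<Omega> \<longrightarrow> set_integrable lebesgue Q w)"

definition A1 :: "'a::euclidean_space set \<Rightarrow> ('a \<Rightarrow> real) set" where
  "A1 \<Omega> = {w. weight \<Omega> w \<and>
      (\<exists>C::real. AE x in lebesgue. x \<in> \<Omega> \<longrightarrow> maxfun \<Omega> w x \<le> ennreal C * ennreal (w x))}"

definition MA1 :: "real \<Rightarrow> 'a::euclidean_space set \<Rightarrow> ('a \<Rightarrow> real) \<Rightarrow> bool" where
  "MA1 r \<Omega> g \<longleftrightarrow> g \<in> borel_measurable (restrict_space lebesgue \<Omega>) \<and>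
     (\<exists>w \<in> A1 \<Omega>. AE x in lebesgue. x \<in> \<Omega> \<longrightarrow> \<bar>g x\<bar> powr r \<le> w x)"

text \<open>Membership of an extended-valued function (such as a maximal function) in M^r_{A_1}:
  it must be finite a.e. on Omega (forced by |G|^r \<le> w) and its real part belongs to the class.\<close>
definition MA1_ext :: "real \<Rightarrow> 'a::euclidean_space set \<Rightarrow> ('a \<Rightarrow> ennreal) \<Rightarrow> bool" where
  "MA1_ext r \<Omega> G \<longleftrightarrow> (AE x in lebesgue. x \<in> \<Omega> \<longrightarrow> G x < \<infinity>) \<and>
     MA1 r \<Omega> (\<lambda>x. enn2real (G x))"

end

theory Submission
  imports Defs
begin

text \<open>(i) \<open>\<Rightarrow>\<close> (ii): if \<open>\<bar>f\<bar>\<^sup>r \<le> w\<close> with \<open>M w \<le> C w\<close>, then \<open>M(\<bar>f\<bar>\<^sup>r) \<le> M w \<le> C w\<close>, and \<open>C w\<close> is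
  again an \<open>A\<^sub>1\<close> weight. (ii) \<open>\<Rightarrow>\<close> (iii): Jensen's inequality on every cube gives
  \<open>(M f)\<^sup>r \<le> M(\<bar>f\<bar>\<^sup>r)\<close>. (ii) \<open>\<Rightarrow>\<close> (i) and (iii) \<open>\<Rightarrow>\<close> (i): \<open>\<bar>g\<bar> \<le> M g\<close> almost everywhere, a form of the
  Lebesgue density theorem that follows from the Vitali covering theorem. The maximal functions
  are measurable because they are lower semicontinuous in the interior of \<open>\<Omega>\<close>, and the boundary
  of \<open>\<Omega>\<close> is null.\<close>

definition cube :: "'a::euclidean_space \<Rightarrow> real \<Rightarrow> 'a set" where
  "cube x h = cbox (x - h *\<^sub>R One) (x + h *\<^sub>R One)"

lemma emeasure_cbox_One:
  fixes a :: "'a::euclidean_space"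
  assumes "l \<ge> 0"
  shows "emeasure lebesgue (cbox a (a + l *\<^sub>R One)) = ennreal (l ^ DIM('a))"
  using assms by (simp add: emeasure_lborel_cbox_eq inner_add_left)

lemma cube_eq_cbox_One:
  "cube (x::'a::euclidean_space) h = cbox (x - h *\<^sub>R One) (x - h *\<^sub>R One + (2 * h) *\<^sub>R One)"
proof -
  have "(2 * h) *\<^sub>R One = h *\<^sub>R One + h *\<^sub>R (One::'a)"
    by (simp flip: scaleR_add_left)
  then have "x - h *\<^sub>R One + (2 * h) *\<^sub>R One = x + h *\<^sub>R One" by simp
  then show ?thesis unfolding cube_def by (simp only:)
qed

lemma is_cube_cube: "h > 0 \<Longrightarrow> is_cube (cube x h)"
  unfolding is_cube_def cube_eq_cbox_One by (intro exI[of _ "x - h *\<^sub>R One"] exI[of _ "2 * h"]) simp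

lemma measure_cube:
  fixes x :: "'a::euclidean_space"
  assumes "h \<ge> 0"
  shows "measure lebesgue (cube x h) = (2 * h) ^ DIM('a)"
  using emeasure_cbox_One[of "2 * h" "x - h *\<^sub>R One"] assms
  by (simp add: measure_def cube_eq_cbox_One)

lemma cube_lmeasurable [simp]: "cube x h \<in> lmeasurable"
  unfolding cube_def by simp

lemma cube_mono: "h \<le> h' \<Longrightarrow> cube x h \<subseteq> cube x h'"
  unfolding cube_def by (intro subset_box_imp) (auto simp: inner_diff_left inner_add_left)

lemma centre_in_cube: "h \<ge> 0 \<Longrightarrow> x \<in> cube x h"
  unfolding cube_def mem_box by (auto simp: inner_diff_left inner_add_left)

lemma ball_subset_cube: "ball x d \<subseteq> cube x d"
proof
  fix y assume "y \<in> ball x d"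
  then have "norm (y - x) < d" by (simp add: dist_norm norm_minus_commute)
  then have "\<bar>(y - x) \<bullet> b\<bar> \<le> d" if "b \<in> Basis" for b
    using Basis_le_norm[OF that, of "y - x"] by linarith
  then show "y \<in> cube x d"
    unfolding cube_def mem_box by (auto simp: inner_diff_left inner_add_left abs_le_iff algebra_simps)
qed

lemma cube_subset_ball:
  assumes "d > 0"
  shows "cube x (d / (2 * DIM('a))) \<subseteq> ball (x::'a::euclidean_space) d"
proof
  fix y assume "y \<in> cube x (d / (2 * DIM('a)))"
  then have b: "\<bar>(y - x) \<bullet> b\<bar> \<le> d / (2 * DIM('a))" if "b \<in> Basis" for b
    using that unfolding cube_def mem_box
    by (auto simp: inner_diff_left inner_add_left abs_le_iff algebra_simps)
  have "norm (y - x) \<le> (\<Sum>b\<in>Basis. \<bar>(y - x) \<bullet> b\<bar>)" by (rule norm_le_l1)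
  also have "\<dots> \<le> (\<Sum>b\<in>(Basis::'a set). d / (2 * DIM('a)))" by (rule sum_mono) (use b in auto)
  also have "\<dots> < d" using assms by simp
  finally show "y \<in> ball x d" by (simp add: dist_norm norm_minus_commute)
qed

lemma small_cubes_subset:
  fixes x :: "'a::euclidean_space"
  assumes "x \<in> interior \<Omega>"
  obtains k where "k > 0" "\<And>h. h < k \<Longrightarrow> cube x h \<subseteq> \<Omega>"
proof -
  obtain e where e: "e > 0" "ball x e \<subseteq> \<Omega>"
    using assms by (meson interior_subset open_contains_ball open_interior subset_trans)
  define k where "k = e / (2 * DIM('a))"
  have "cube x h \<subseteq> \<Omega>" if "h < k" for h
    using cube_mono[of h k x] cube_subset_ball[OF e(1), of x] e(2) that by (simp add: k_def)
  moreover have "k > 0" using e by (simp add: k_def)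
  ultimately show ?thesis using that by blast
qed

lemma is_cube_lmeasurable: "is_cube Q \<Longrightarrow> Q \<in> lmeasurable"
  unfolding is_cube_def by auto

lemma is_cube_emeasure:
  fixes Q :: "'a::euclidean_space set"
  assumes "is_cube Q"
  shows "emeasure lebesgue Q = ennreal (measure lebesgue Q)" "measure lebesgue Q > 0"
proof -
  obtain a l where al: "l > 0" "Q = cbox a (a + l *\<^sub>R One)" using assms unfolding is_cube_def by auto
  then show eq: "emeasure lebesgue Q = ennreal (measure lebesgue Q)"
    by (simp add: emeasure_eq_measure2)
  show "measure lebesgue Q > 0"
    using eq emeasure_cbox_One[of l a] al by simp
qed

lemma domain_sets_lebesgue: "\<Omega> = UNIV \<or> is_cube \<Omega> \<Longrightarrow> \<Omega> \<in> sets lebesgue"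
  unfolding is_cube_def by auto

lemma domain_negligible_boundary:
  "\<Omega> = UNIV \<or> is_cube (\<Omega>::'a::euclidean_space set) \<Longrightarrow> negligible (\<Omega> - interior \<Omega>)"
  unfolding is_cube_def by (auto simp: negligible_frontier_interval)

lemma domain_convex: "\<Omega> = UNIV \<or> is_cube (\<Omega>::'a::euclidean_space set) \<Longrightarrow> convex \<Omega>"
  unfolding is_cube_def by auto

lemma emeasure_disjoint_UN_le:
  fixes B :: "'i \<Rightarrow> 'a::euclidean_space set"
  assumes C: "countable C" "disjoint_family_on B C" and B: "\<And>i. i \<in> C \<Longrightarrow> B i \<in> lmeasurable"
    and E: "E \<in> sets lebesgue" and \<kappa>: "\<kappa> \<ge> 0"
    and thin: "\<And>i. i \<in> C \<Longrightarrow> measure lebesgue (B i) \<le> \<kappa> * measure lebesgue (B i - E)"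
  shows "emeasure lebesgue (\<Union>(B ` C)) \<le> ennreal \<kappa> * emeasure lebesgue (\<Union>i\<in>C. B i - E)"
proof -
  have disj: "disjoint_family_on (\<lambda>i. B i - E) C"
    using C(2) unfolding disjoint_family_on_def by blast
  have "emeasure lebesgue (\<Union>(B ` C)) = (\<integral>\<^sup>+ i. emeasure lebesgue (B i) \<partial>count_space C)"
    using C B by (intro emeasure_UN_countable) auto
  also have "\<dots> \<le> (\<integral>\<^sup>+ i. ennreal \<kappa> * emeasure lebesgue (B i - E) \<partial>count_space C)"
  proof (rule nn_integral_mono)
    fix i assume "i \<in> space (count_space C)"
    then have i: "i \<in> C" by simp
    have "B i - E \<in> lmeasurable" using B[OF i] E by (intro fmeasurable_Diff)
    then show "emeasure lebesgue (B i) \<le> ennreal \<kappa> * emeasure lebesgue (B i - E)"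
      using thin[OF i] B[OF i] \<kappa> by (simp add: emeasure_eq_measure2 ennreal_mult[symmetric])
  qed
  also have "\<dots> = ennreal \<kappa> * (\<integral>\<^sup>+ i. emeasure lebesgue (B i - E) \<partial>count_space C)"
    by (rule nn_integral_cmult) simp
  also have "(\<integral>\<^sup>+ i. emeasure lebesgue (B i - E) \<partial>count_space C) = emeasure lebesgue (\<Union>i\<in>C. B i - E)"
    using C(1) disj B E by (intro emeasure_UN_countable[symmetric]) auto
  finally show ?thesis .
qed

lemma negligible_if_balls_thin:
  fixes E S :: "'a::euclidean_space set"
  assumes E: "E \<in> sets lebesgue" and SE: "S \<subseteq> E" and \<kappa>: "\<kappa> > 0" and k: "k > 0"
    and thin: "\<And>x d. x \<in> S \<Longrightarrow> 0 < d \<Longrightarrow> d < k \<Longrightarrow>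
      measure lebesgue (ball x d) \<le> \<kappa> * measure lebesgue (ball x d - E)"
  shows "negligible S"
  unfolding negligible_outer_le
proof (intro allI impI)
  fix e :: real assume e: "e > 0"
  obtain U where U: "open U" "E \<subseteq> U" "U - E \<in> lmeasurable" "emeasure lebesgue (U - E) < ennreal (e/\<kappa>)"
    using sets_lebesgue_outer_open[OF E, of "e/\<kappa>"] e \<kappa> by auto
  define K where "K = {(x,d). x \<in> S \<and> 0 < d \<and> d < k \<and> ball x d \<subseteq> U}"
  have fine: "\<exists>i. i \<in> K \<and> x \<in> ball (fst i) (snd i) \<and> snd i < d" if "x \<in> S" "0 < d" for x d
  proof -
    have "x \<in> U" using that SE U(2) by blast
    then obtain \<epsilon> where \<epsilon>: "\<epsilon> > 0" "ball x \<epsilon> \<subseteq> U"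
      using U(1) open_contains_ball by blast
    define d' where "d' = min (min d k) \<epsilon> / 2"
    have "d' > 0" "d' < d" "d' < k" "d' \<le> \<epsilon>" using \<epsilon> that k by (auto simp: d'_def)
    then show ?thesis using that \<epsilon> by (intro exI[of _ "(x, d')"]) (auto simp: K_def)
  qed
  obtain C where C: "countable C" "C \<subseteq> K"
    "pairwise (\<lambda>i j. disjnt (ball (fst i) (snd i)) (ball (fst j) (snd j))) C"
    "negligible (S - (\<Union>i\<in>C. ball (fst i) (snd i)))"
    by (rule Vitali_covering_theorem_balls[of S K fst snd, OF fine])
  define B where "B i = ball (fst i) (snd i)" for i :: "'a \<times> real"
  have BK: "B i \<subseteq> U \<and> fst i \<in> S \<and> 0 < snd i \<and> snd i < k" if "i \<in> C" for i
    using C(2) that by (cases i) (auto simp: K_def B_def)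
  have "emeasure lebesgue (\<Union>(B ` C)) \<le> ennreal \<kappa> * emeasure lebesgue (\<Union>i\<in>C. B i - E)"
  proof (rule emeasure_disjoint_UN_le[OF C(1) _ _ E])
    show "disjoint_family_on B C"
      using C(3) unfolding disjoint_family_on_def pairwise_def disjnt_def B_def by blast
    show "measure lebesgue (B i) \<le> \<kappa> * measure lebesgue (B i - E)" if "i \<in> C" for i
      using thin BK[OF that] by (simp add: B_def)
  qed (use \<kappa> in \<open>auto simp: B_def\<close>)
  also have "\<dots> \<le> ennreal \<kappa> * emeasure lebesgue (U - E)"
  proof (intro mult_left_mono emeasure_mono)
    show "(\<Union>i\<in>C. B i - E) \<subseteq> U - E" using BK by blast
  qed (use U(3) in auto)
  also have "\<dots> \<le> ennreal \<kappa> * ennreal (e/\<kappa>)"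
    using U(4) by (intro mult_left_mono) auto
  also have "\<dots> = ennreal (\<kappa> * (e / \<kappa>))" using \<kappa> e by (subst ennreal_mult) auto
  also have "\<dots> = ennreal e" using \<kappa> by simp
  finally have em: "emeasure lebesgue (\<Union>(B ` C)) \<le> ennreal e" .
  have "\<Union>(B ` C) \<in> sets lebesgue" using C(1) by (auto simp: B_def intro!: sets.countable_UN')
  then have Bf: "\<Union>(B ` C) \<in> lmeasurable" using em by (intro fmeasurableI) (auto intro: le_less_trans)
  define N where "N = S - \<Union>(B ` C)"
  have N: "N \<in> null_sets lebesgue" using C(4) by (simp add: N_def B_def negligible_iff_null_sets)
  show "\<exists>T. S \<subseteq> T \<and> T \<in> lmeasurable \<and> measure lebesgue T \<le> e"
  proof (intro exI[of _ "\<Union>(B ` C) \<union> N"] conjI)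
    show "S \<subseteq> \<Union>(B ` C) \<union> N" by (auto simp: N_def)
    show "\<Union>(B ` C) \<union> N \<in> lmeasurable" using fmeasurable.Un[OF Bf fmeasurableI_null_sets[OF N]] .
    have "measure lebesgue (\<Union>(B ` C) \<union> N) = measure lebesgue (\<Union>(B ` C))"
      using N Bf by (intro measure_Un_null_set) auto
    also have "\<dots> \<le> e" using em Bf e by (simp add: emeasure_eq_measure2)
    finally show "measure lebesgue (\<Union>(B ` C) \<union> N) \<le> e" .
  qed
qed

text \<open>A quantitative Lebesgue density theorem for centred cubes: almost no point of \<open>E\<close> sees a
  fixed proportion of the complement of \<open>E\<close> in all its small cubes.\<close>
lemma negligible_cube_density_deficit:
  fixes E :: "'a::euclidean_space set"
  assumes E: "E \<in> sets lebesgue" and \<eta>: "\<eta> > 0" and k: "k > 0"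
  shows "negligible {x\<in>E. \<forall>h. 0 < h \<and> h < k \<longrightarrow>
           \<eta> * measure lebesgue (cube x h) \<le> measure lebesgue (cube x h - E)}" (is "negligible ?S")
proof -
  define D where "D = 2 * real DIM('a)"
  have D: "D \<ge> 1" unfolding D_def using DIM_positive[where 'a='a] by linarith
  show ?thesis
  proof (rule negligible_if_balls_thin[OF E _ _ k])
    show "?S \<subseteq> E" by blast
    show "0 < D ^ DIM('a) / \<eta>" using D \<eta> by simp
    fix x d assume x: "x \<in> ?S" and d: "0 < d" "d < k"
    define h where "h = d / D"
    have hd: "d = D * h" "0 < h" using D d by (simp_all add: h_def)
    moreover have "1 * h \<le> D * h" using D hd by (intro mult_right_mono) auto
    ultimately have h: "0 < h" "h < k" using d by linarith+
    have "measure lebesgue (ball x d) \<le> measure lebesgue (cube x d)"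
      by (rule measure_mono_fmeasurable) (auto simp: ball_subset_cube)
    also have "\<dots> = D ^ DIM('a) * measure lebesgue (cube x h)"
      using hd d by (simp add: measure_cube power_mult_distrib mult.left_commute)
    also have "\<dots> \<le> D ^ DIM('a) * (measure lebesgue (cube x h - E) / \<eta>)"
      using x h \<eta> D by (intro mult_left_mono) (auto simp: pos_le_divide_eq mult.commute)
    also have "\<dots> \<le> D ^ DIM('a) * (measure lebesgue (ball x d - E) / \<eta>)"
    proof -
      have "cube x h \<subseteq> ball x d" using cube_subset_ball[OF d(1), of x] by (simp add: h_def D_def)
      then have "measure lebesgue (cube x h - E) \<le> measure lebesgue (ball x d - E)"
        using E by (intro measure_mono_fmeasurable) (auto intro!: fmeasurable_Diff sets.Diff fmeasurableD)
      then show ?thesis using \<eta> D by (intro mult_left_mono divide_right_mono) auto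
    qed
    finally show "measure lebesgue (ball x d) \<le> D ^ DIM('a) / \<eta> * measure lebesgue (ball x d - E)"
      by (simp only: times_divide_eq_left times_divide_eq_right)
  qed
qed

lemma borel_measurable_indicator_mult:
  assumes "\<Omega> \<in> sets lebesgue" and "f \<in> borel_measurable (restrict_space lebesgue \<Omega>)"
  shows "(\<lambda>y. indicator \<Omega> y * f y :: real) \<in> borel_measurable lebesgue"
  using assms borel_measurable_restrict_space_iff[of \<Omega> lebesgue f] by simp

lemma set_nn_integral_indicator_mult:
  "Q \<subseteq> \<Omega> \<Longrightarrow> (\<integral>\<^sup>+ y\<in>Q. ennreal (h (indicator \<Omega> y * f y :: real)) \<partial>M) = (\<integral>\<^sup>+ y\<in>Q. ennreal (h (f y)) \<partial>M)"
  by (intro nn_integral_cong) (auto simp: indicator_def)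

lemma cube_average_le_maxfun:
  "is_cube Q \<Longrightarrow> Q \<subseteq> \<Omega> \<Longrightarrow> x \<in> Q \<Longrightarrow>
    (\<integral>\<^sup>+ y\<in>Q. ennreal \<bar>g y\<bar> \<partial>lebesgue) / emeasure lebesgue Q \<le> maxfun \<Omega> g x"
  unfolding maxfun_def by (rule SUP_upper) auto

lemma maxfun_mono_AE:
  assumes "AE y in lebesgue. y \<in> \<Omega> \<longrightarrow> \<bar>g y\<bar> \<le> \<bar>w y\<bar>"
  shows "maxfun \<Omega> g x \<le> maxfun \<Omega> w x"
  unfolding maxfun_def
proof (rule SUP_mono)
  fix Q assume Q: "Q \<in> {Q. is_cube Q \<and> Q \<subseteq> \<Omega> \<and> x \<in> Q}"
  have "(\<integral>\<^sup>+ y\<in>Q. ennreal \<bar>g y\<bar> \<partial>lebesgue) \<le> (\<integral>\<^sup>+ y\<in>Q. ennreal \<bar>w y\<bar> \<partial>lebesgue)"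
    using assms by (intro nn_integral_mono_AE, eventually_elim) (use Q in \<open>auto simp: indicator_def\<close>)
  then show "\<exists>Q'\<in>{Q. is_cube Q \<and> Q \<subseteq> \<Omega> \<and> x \<in> Q}.
       (\<integral>\<^sup>+ y\<in>Q. ennreal \<bar>g y\<bar> \<partial>lebesgue) / emeasure lebesgue Q
       \<le> (\<integral>\<^sup>+ y\<in>Q'. ennreal \<bar>w y\<bar> \<partial>lebesgue) / emeasure lebesgue Q'"
    using Q by (intro bexI[of _ Q] divide_right_mono_ennreal)
qed

lemma maxfun_cmult:
  fixes w :: "'a::euclidean_space \<Rightarrow> real"
  assumes c: "c \<ge> 0" and w: "\<And>Q. is_cube Q \<Longrightarrow> Q \<subseteq> \<Omega> \<Longrightarrow> set_integrable lebesgue Q w"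
  shows "maxfun \<Omega> (\<lambda>x. c * w x) x = ennreal c * maxfun \<Omega> w x"
  unfolding maxfun_def SUP_mult_left_ennreal
proof (rule SUP_cong[OF refl])
  fix Q assume "Q \<in> {Q. is_cube Q \<and> Q \<subseteq> \<Omega> \<and> x \<in> Q}"
  then have "set_integrable lebesgue Q w" using w by auto
  then have m: "(\<lambda>y. ennreal \<bar>indicator Q y *\<^sub>R w y\<bar>) \<in> borel_measurable lebesgue"
    unfolding set_integrable_def by measurable
  have "(\<integral>\<^sup>+ y\<in>Q. ennreal \<bar>c * w y\<bar> \<partial>lebesgue) = (\<integral>\<^sup>+ y. ennreal c * ennreal \<bar>indicator Q y *\<^sub>R w y\<bar> \<partial>lebesgue)"
    using c by (intro nn_integral_cong) (auto simp: indicator_def abs_mult ennreal_mult)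
  also have "\<dots> = ennreal c * (\<integral>\<^sup>+ y. ennreal \<bar>indicator Q y *\<^sub>R w y\<bar> \<partial>lebesgue)"
    using m by (rule nn_integral_cmult)
  also have "(\<integral>\<^sup>+ y. ennreal \<bar>indicator Q y *\<^sub>R w y\<bar> \<partial>lebesgue) = (\<integral>\<^sup>+ y\<in>Q. ennreal \<bar>w y\<bar> \<partial>lebesgue)"
    by (intro nn_integral_cong) (auto simp: indicator_def)
  finally show "(\<integral>\<^sup>+ y\<in>Q. ennreal \<bar>c * w y\<bar> \<partial>lebesgue) / emeasure lebesgue Q =
      ennreal c * ((\<integral>\<^sup>+ y\<in>Q. ennreal \<bar>w y\<bar> \<partial>lebesgue) / emeasure lebesgue Q)"
    by (simp add: ennreal_times_divide)
qed

lemma A1_cmult: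
  assumes w: "w \<in> A1 \<Omega>" and c: "c > 0"
  shows "(\<lambda>x. c * w x) \<in> A1 \<Omega>"
proof -
  obtain C :: real where C: "AE x in lebesgue. x \<in> \<Omega> \<longrightarrow> maxfun \<Omega> w x \<le> ennreal C * ennreal (w x)"
    using w unfolding A1_def by auto
  have pos: "AE x in lebesgue. x \<in> \<Omega> \<longrightarrow> w x > 0"
    and int: "\<And>Q. is_cube Q \<Longrightarrow> Q \<subseteq> \<Omega> \<Longrightarrow> set_integrable lebesgue Q w"
    using w unfolding A1_def weight_def by auto
  have "weight \<Omega> (\<lambda>x. c * w x)"
    unfolding weight_def using pos int c by (auto elim!: AE_mp)
  moreover have "AE x in lebesgue. x \<in> \<Omega> \<longrightarrow> maxfun \<Omega> (\<lambda>x. c * w x) x \<le> ennreal C * ennreal (c * w x)"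
    using C pos
  proof eventually_elim
    case (elim x)
    show ?case
    proof
      assume x: "x \<in> \<Omega>"
      have "maxfun \<Omega> (\<lambda>x. c * w x) x = ennreal c * maxfun \<Omega> w x"
        using c int by (intro maxfun_cmult) auto
      also have "\<dots> \<le> ennreal c * (ennreal C * ennreal (w x))"
        using elim x by (intro mult_left_mono) auto
      also have "\<dots> = ennreal C * ennreal (c * w x)"
        using c elim x by (simp add: ennreal_mult mult_ac)
      finally show "maxfun \<Omega> (\<lambda>x. c * w x) x \<le> ennreal C * ennreal (c * w x)" .
    qed
  qed
  ultimately show ?thesis unfolding A1_def by blast
qed

lemma maxfun_gt_if_level_set_dense:
  assumes Q: "is_cube Q" "Q \<subseteq> \<Omega>" "x \<in> Q" and E: "E \<in> sets lebesgue"
    and st: "0 \<le> t" "t < s" and level: "\<And>y. y \<in> E \<Longrightarrow> s < \<bar>g y\<bar>"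
    and dense: "measure lebesgue (Q - E) < ((s - t) / s) * measure lebesgue Q"
  shows "ennreal t < maxfun \<Omega> g x"
proof -
  have Q_pos: "measure lebesgue Q > 0" using Q(1) by (rule is_cube_emeasure)
  have QE: "Q \<inter> E \<in> lmeasurable" using is_cube_lmeasurable[OF Q(1)] E by (rule fmeasurable_Int_fmeasurable)
  have diff: "measure lebesgue (Q - E) = measure lebesgue Q - measure lebesgue (Q \<inter> E)"
    using measurable_measure_Diff[of Q lebesgue "Q \<inter> E"] E is_cube_lmeasurable[OF Q(1)]
    by (simp add: Diff_Int)
  have "s * measure lebesgue (Q - E) < (s - t) * measure lebesgue Q"
    using dense st by (simp add: field_simps)
  then have "t * measure lebesgue Q < s * measure lebesgue (Q \<inter> E)"
    unfolding diff by (simp add: algebra_simps)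
  then have "ennreal t < ennreal (s * measure lebesgue (Q \<inter> E)) / emeasure lebesgue Q"
    using Q_pos st is_cube_emeasure(1)[OF Q(1)] by (simp add: divide_ennreal ennreal_less_iff field_simps)
  also have "ennreal (s * measure lebesgue (Q \<inter> E)) = (\<integral>\<^sup>+ y\<in>Q \<inter> E. ennreal s \<partial>lebesgue)"
    using QE st by (simp add: nn_integral_cmult_indicator emeasure_eq_measure2 ennreal_mult)
  also have "\<dots> \<le> (\<integral>\<^sup>+ y\<in>Q. ennreal \<bar>g y\<bar> \<partial>lebesgue)"
    using level by (intro nn_integral_mono) (auto simp: indicator_def less_imp_le)
  then have "(\<integral>\<^sup>+ y\<in>Q \<inter> E. ennreal s \<partial>lebesgue) / emeasure lebesgue Q
      \<le> (\<integral>\<^sup>+ y\<in>Q. ennreal \<bar>g y\<bar> \<partial>lebesgue) / emeasure lebesgue Q"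
    by (rule divide_right_mono_ennreal)
  also have "\<dots> \<le> maxfun \<Omega> g x" using Q by (rule cube_average_le_maxfun)
  finally show ?thesis .
qed

text \<open>Outside a null set, every point of \<open>\<Omega>\<close> is interior and, for all rationals \<open>0 \<le> t < s\<close>,
  the level set \<open>{s < \<bar>g\<bar>}\<close> fills more than the fraction \<open>t/s\<close> of some small cube around
  it, which forces a cube average of \<open>\<bar>g\<bar>\<close> above \<open>t\<close>.\<close>
lemma abs_le_maxfun_AE:
  fixes \<Omega> :: "'a::euclidean_space set" and g :: "'a \<Rightarrow> real"
  assumes \<Omega>: "\<Omega> = UNIV \<or> is_cube \<Omega>" and g: "g \<in> borel_measurable (restrict_space lebesgue \<Omega>)"
  shows "AE x in lebesgue. x \<in> \<Omega> \<longrightarrow> ennreal \<bar>g x\<bar> \<le> maxfun \<Omega> g x"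
proof -
  define E where "E s = interior \<Omega> \<inter> {x \<in> \<Omega>. s < \<bar>g x\<bar>}" for s
  have E: "E s \<in> sets lebesgue" for s
  proof -
    have "{x \<in> space (restrict_space lebesgue \<Omega>). s < \<bar>g x\<bar>} \<in> sets (restrict_space lebesgue \<Omega>)"
      using g by measurable
    then show ?thesis
      using domain_sets_lebesgue[OF \<Omega>] by (auto simp: E_def sets_restrict_space_iff)
  qed
  define F where "F = (\<lambda>(s::real, t::real, n::nat). if 0 \<le> t \<and> t < s then
     {x\<in>E s. \<forall>h. 0 < h \<and> h < 1 / Suc n \<longrightarrow>
           ((s-t)/s) * measure lebesgue (cube x h) \<le> measure lebesgue (cube x h - E s)} else {})"
  have F: "negligible (F i)" for i
  proof (cases i)
    case (fields s t n)
    then show ?thesis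
      using negligible_cube_density_deficit[OF E, of "(s-t)/s" "1 / Suc n" s] by (auto simp: F_def)
  qed
  define N where "N = (\<Omega> - interior \<Omega>) \<union> \<Union>(F ` (\<rat> \<times> \<rat> \<times> UNIV))"
  have N: "negligible N" unfolding N_def
    using domain_negligible_boundary[OF \<Omega>] F
    by (intro negligible_Un negligible_countable_Union) (auto intro: countable_SIGMA countable_rat)
  have "ennreal \<bar>g x\<bar> \<le> maxfun \<Omega> g x" if x: "x \<in> \<Omega>" "x \<notin> N" for x
  proof (rule ccontr)
    assume "\<not> ?thesis"
    then obtain m where m: "maxfun \<Omega> g x = ennreal m" "0 \<le> m" "m < \<bar>g x\<bar>"
      by (cases "maxfun \<Omega> g x") (auto simp: ennreal_less_iff)
    obtain t where t: "t \<in> \<rat>" "m < t" "t < \<bar>g x\<bar>" using Rats_dense_in_real[OF m(3)] by blast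
    obtain s where s: "s \<in> \<rat>" "t < s" "s < \<bar>g x\<bar>" using Rats_dense_in_real[OF t(3)] by blast
    have xi: "x \<in> interior \<Omega>" using x unfolding N_def by auto
    obtain k where k: "k > 0" "\<And>h. h < k \<Longrightarrow> cube x h \<subseteq> \<Omega>"
      using small_cubes_subset[OF xi] by blast
    obtain n :: nat where n: "1 / Suc n < k" using k(1) by (meson nat_approx_posE)
    have st: "0 \<le> t" "t < s" using m t s by auto
    have "x \<in> E s" using xi x s unfolding E_def by auto
    moreover have "x \<notin> F (s, t, n)" using x(2) s(1) t(1) unfolding N_def by auto
    ultimately obtain h where h: "0 < h" "h < 1 / Suc n"
      "measure lebesgue (cube x h - E s) < ((s-t)/s) * measure lebesgue (cube x h)"
      using st unfolding F_def by (auto simp: not_le)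
    have "is_cube (cube x h)" "cube x h \<subseteq> \<Omega>" "x \<in> cube x h"
      using h n k(2)[of h] by (auto simp: is_cube_cube centre_in_cube)
    then have "ennreal t < maxfun \<Omega> g x"
      by (rule maxfun_gt_if_level_set_dense[OF _ _ _ E st _ h(3)]) (auto simp: E_def)
    then show False using m t(2) by (simp add: ennreal_less_iff)
  qed
  then show ?thesis
    using N by (intro AE_I'[of N]) (auto simp: negligible_iff_null_sets)
qed

lemma divide_le_iff_ennreal:
  fixes x y :: ennreal
  assumes "c > 0"
  shows "x / ennreal c \<le> y \<longleftrightarrow> x \<le> y * ennreal c"
proof
  assume "x / ennreal c \<le> y"
  have "x = x / ennreal c * ennreal c"
    using assms by (simp add: ennreal_divide_times)
  also have "\<dots> \<le> y * ennreal c" using \<open>x / ennreal c \<le> y\<close> by (rule mult_right_mono) simp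
  finally show "x \<le> y * ennreal c" .
next
  assume "x \<le> y * ennreal c"
  then show "x / ennreal c \<le> y" using assms by (intro divide_le_posI_ennreal) (auto simp: mult.commute)
qed

text \<open>The tangent line of \<open>y powr r\<close> at \<open>a\<close> lies below the graph (Young's inequality).\<close>
lemma powr_tangent_bound:
  fixes y a r :: real
  assumes y: "y \<ge> 0" and a: "a > 0" and r: "r \<ge> 1"
  shows "y \<le> a / (r * a powr r) * y powr r + a * (1 - 1/r)"
proof -
  have "y / a \<le> (y/a) powr r / r + (1 - 1/r)"
  proof (cases "y = 0")
    case True then show ?thesis using r by simp
  next
    case False
    then have "((y/a) powr r) powr (1/r) * 1 powr (1 - 1/r) \<le> (1/r) * (y/a) powr r + (1 - 1/r) * 1"
      using r y a by (intro Youngs_inequality_0) auto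
    then show ?thesis using False y a r by (simp add: powr_powr)
  qed
  then have "a * (y / a) \<le> a * ((y/a) powr r / r + (1 - 1/r))" using a by (intro mult_left_mono) auto
  then show ?thesis using y a by (simp add: powr_divide field_simps)
qed

lemma set_nn_integral_le_power_mean:
  fixes f :: "'a \<Rightarrow> real"
  assumes f: "f \<in> borel_measurable M" and r: "r \<ge> 1"
    and Q: "Q \<in> sets M" "emeasure M Q = ennreal c" "c > 0"
    and A: "(\<integral>\<^sup>+ y\<in>Q. ennreal (\<bar>f y\<bar> powr r) \<partial>M) = ennreal A" "A \<ge> 0"
  shows "(\<integral>\<^sup>+ y\<in>Q. ennreal \<bar>f y\<bar> \<partial>M) \<le> ennreal (c * (A/c) powr (1/r))"
proof (cases "A = 0")
  case True
  have "AE y in M. ennreal (\<bar>f y\<bar> powr r) * indicator Q y = 0"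
    using A True f Q by (subst nn_integral_0_iff_AE[symmetric]) auto
  then have "AE y in M. ennreal \<bar>f y\<bar> * indicator Q y = 0"
    by eventually_elim (auto simp: indicator_def ennreal_eq_0_iff)
  then have "(\<integral>\<^sup>+ y\<in>Q. ennreal \<bar>f y\<bar> \<partial>M) = 0"
    using f Q by (subst nn_integral_0_iff_AE) auto
  then show ?thesis by simp
next
  case False
  then have A0: "A > 0" using A(2) by simp
  define a where "a = (A/c) powr (1/r)"
  have a: "a > 0" "a powr r = A / c" using A0 Q(3) r by (simp_all add: a_def powr_powr)
  define K where "K = a / (r * a powr r)"
  define L where "L = a * (1 - 1/r)"
  have KL: "K \<ge> 0" "L \<ge> 0" using a(1) r by (simp_all add: K_def L_def field_simps)
  have "(\<integral>\<^sup>+ y\<in>Q. ennreal \<bar>f y\<bar> \<partial>M) \<le>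
        (\<integral>\<^sup>+ y. ennreal K * (ennreal (\<bar>f y\<bar> powr r) * indicator Q y) + ennreal L * indicator Q y \<partial>M)"
  proof (rule nn_integral_mono)
    fix y
    have "\<bar>f y\<bar> \<le> K * \<bar>f y\<bar> powr r + L"
      unfolding K_def L_def using a r by (intro powr_tangent_bound) auto
    then have "ennreal \<bar>f y\<bar> \<le> ennreal K * ennreal (\<bar>f y\<bar> powr r) + ennreal L"
      using KL by (simp add: ennreal_mult[symmetric] ennreal_plus[symmetric] del: ennreal_plus)
    then show "ennreal \<bar>f y\<bar> * indicator Q y
        \<le> ennreal K * (ennreal (\<bar>f y\<bar> powr r) * indicator Q y) + ennreal L * indicator Q y"
      by (auto simp: indicator_def)
  qed
  also have "\<dots> = ennreal K * ennreal A + ennreal L * ennreal c"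
    using f Q A by (simp add: nn_integral_add nn_integral_cmult nn_integral_cmult_indicator)
  also have "\<dots> = ennreal (K * A + L * c)"
    using A(2) Q(3) KL by (simp add: ennreal_mult ennreal_plus)
  also have "K * A + L * c = c * a"
    using a Q(3) r A0 unfolding K_def L_def by (simp add: field_simps)
  finally show ?thesis by (simp add: a_def)
qed

lemma maxfun_le_root_maxfun_powr:
  fixes \<Omega> :: "'a::euclidean_space set" and f :: "'a \<Rightarrow> real"
  assumes \<Omega>: "\<Omega> \<in> sets lebesgue" and f: "f \<in> borel_measurable (restrict_space lebesgue \<Omega>)"
    and r: "r \<ge> 1" and m: "maxfun \<Omega> (\<lambda>x. \<bar>f x\<bar> powr r) x = ennreal m" "m \<ge> 0"
  shows "maxfun \<Omega> f x \<le> ennreal (m powr (1/r))"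
  unfolding maxfun_def
proof (rule SUP_least)
  fix Q assume "Q \<in> {Q. is_cube Q \<and> Q \<subseteq> \<Omega> \<and> x \<in> Q}"
  then have Q: "is_cube Q" "Q \<subseteq> \<Omega>" "x \<in> Q" by auto
  define c where "c = measure lebesgue Q"
  have c: "c > 0" "emeasure lebesgue Q = ennreal c" "Q \<in> sets lebesgue"
    using is_cube_emeasure[OF Q(1)] is_cube_lmeasurable[OF Q(1)] by (auto simp: c_def)
  define f0 where "f0 y = indicator \<Omega> y * f y" for y
  have f0: "f0 \<in> borel_measurable lebesgue"
    unfolding f0_def using \<Omega> f by (rule borel_measurable_indicator_mult)
  have int_eq: "(\<integral>\<^sup>+ y\<in>Q. ennreal (h (f0 y)) \<partial>lebesgue) = (\<integral>\<^sup>+ y\<in>Q. ennreal (h (f y)) \<partial>lebesgue)" for h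
    unfolding f0_def using Q(2) by (rule set_nn_integral_indicator_mult)
  have "(\<integral>\<^sup>+ y\<in>Q. ennreal (\<bar>f0 y\<bar> powr r) \<partial>lebesgue) / ennreal c \<le> ennreal m"
    using cube_average_le_maxfun[OF Q, of "\<lambda>x. \<bar>f x\<bar> powr r"] m(1) c(2) int_eq[of "\<lambda>v. \<bar>v\<bar> powr r"]
    by simp
  then have "(\<integral>\<^sup>+ y\<in>Q. ennreal (\<bar>f0 y\<bar> powr r) \<partial>lebesgue) \<le> ennreal (m * c)"
    using c(1) m(2) by (simp add: divide_le_iff_ennreal ennreal_mult)
  then obtain A where A: "(\<integral>\<^sup>+ y\<in>Q. ennreal (\<bar>f0 y\<bar> powr r) \<partial>lebesgue) = ennreal A" "A \<ge> 0"
    "A \<le> m * c"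
    using c(1) m(2) by (cases "\<integral>\<^sup>+ y\<in>Q. ennreal (\<bar>f0 y\<bar> powr r) \<partial>lebesgue") (auto simp: top_unique)
  have "(\<integral>\<^sup>+ y\<in>Q. ennreal \<bar>f y\<bar> \<partial>lebesgue) \<le> ennreal (c * (A/c) powr (1/r))"
    using set_nn_integral_le_power_mean[OF f0 r c(3) c(2) c(1) A(1,2)] int_eq[of abs] by simp
  also have "\<dots> \<le> ennreal (c * m powr (1/r))"
    using A c(1) r by (intro ennreal_leI mult_left_mono powr_mono2) (auto simp: divide_le_eq mult.commute)
  finally have "(\<integral>\<^sup>+ y\<in>Q. ennreal \<bar>f y\<bar> \<partial>lebesgue) / emeasure lebesgue Q \<le> ennreal (c * m powr (1/r)) / ennreal c"
    unfolding c(2) by (rule divide_right_mono_ennreal)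
  also have "\<dots> = ennreal (m powr (1/r))" using c(1) by (simp add: divide_ennreal)
  finally show "(\<integral>\<^sup>+ y\<in>Q. ennreal \<bar>f y\<bar> \<partial>lebesgue) / emeasure lebesgue Q \<le> ennreal (m powr (1/r))" .
qed

lemma UN_inner_cubes:
  fixes a :: "'a::euclidean_space"
  assumes l: "l > 0"
  shows "(\<Union>n. cbox (a + (l / (real n + 2)) *\<^sub>R One) (a + (l - l / (real n + 2)) *\<^sub>R One))
    = box a (a + l *\<^sub>R One)" (is "(\<Union>n. ?A n) = ?B")
proof (intro equalityI subsetI)
  fix y assume "y \<in> (\<Union>n. ?A n)"
  then obtain n where "y \<in> ?A n" by auto
  moreover have "l / (real n + 2) > 0" using l by simp
  ultimately show "y \<in> ?B" by (auto simp: mem_box inner_add_left)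
next
  fix y assume y: "y \<in> ?B"
  define \<epsilon> where "\<epsilon> = Min ((\<lambda>b. min (y \<bullet> b - a \<bullet> b) (a \<bullet> b + l - y \<bullet> b)) ` Basis)"
  have \<epsilon>: "\<epsilon> > 0" using y by (simp add: \<epsilon>_def mem_box inner_add_left)
  obtain n :: nat where "l / \<epsilon> < real n" using reals_Archimedean2 by blast
  then have "l < \<epsilon> * (real n + 2)" using \<epsilon> by (simp add: field_simps)
  then have "l / (real n + 2) < \<epsilon>" by (simp add: field_simps)
  moreover have "\<epsilon> \<le> min (y \<bullet> b - a \<bullet> b) (a \<bullet> b + l - y \<bullet> b)" if "b \<in> Basis" for b
    unfolding \<epsilon>_def using that by (intro Min_le) auto
  ultimately have "y \<in> ?A n" by (fastforce simp: mem_box inner_add_left)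
  then show "y \<in> (\<Union>n. ?A n)" by blast
qed

lemma SUP_set_nn_integral_inner_cubes:
  fixes a :: "'a::euclidean_space" and G :: "'a \<Rightarrow> ennreal"
  assumes G: "G \<in> borel_measurable lebesgue" and l: "l > 0"
  shows "(SUP n. \<integral>\<^sup>+ y \<in> cbox (a + (l / (real n + 2)) *\<^sub>R One) (a + (l - l / (real n + 2)) *\<^sub>R One). G y \<partial>lebesgue)
     = (\<integral>\<^sup>+ y \<in> cbox a (a + l *\<^sub>R One). G y \<partial>lebesgue)"
proof -
  define A where "A n = cbox (a + (l / (real n + 2)) *\<^sub>R One) (a + (l - l / (real n + 2)) *\<^sub>R One)" for n
  have "l / (real n + 2) \<le> l / (real m + 2)" if "m \<le> n" for m n
    using l that by (intro divide_left_mono) auto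
  then have "incseq A" unfolding incseq_def A_def
    by (intro allI impI subset_box_imp) (auto simp: inner_add_left)
  have density: "(\<integral>\<^sup>+ y \<in> S. G y \<partial>lebesgue) = emeasure (density lebesgue G) S" if "S \<in> sets lebesgue" for S
    using G that by (simp add: emeasure_density)
  have "(SUP n. \<integral>\<^sup>+ y \<in> A n. G y \<partial>lebesgue) = (SUP n. emeasure (density lebesgue G) (A n))"
    by (simp add: density A_def)
  also have "\<dots> = emeasure (density lebesgue G) (\<Union>n. A n)"
    by (rule SUP_emeasure_incseq[OF _ \<open>incseq A\<close>]) (auto simp: A_def)
  also have "\<dots> = (\<integral>\<^sup>+ y \<in> box a (a + l *\<^sub>R One). G y \<partial>lebesgue)"
    using UN_inner_cubes[OF l, of a] by (simp add: A_def density)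
  also have "\<dots> = (\<integral>\<^sup>+ y \<in> cbox a (a + l *\<^sub>R One). G y \<partial>lebesgue)"
  proof (rule nn_integral_cong_AE)
    have "cbox a (a + l *\<^sub>R One) - box a (a + l *\<^sub>R One) \<in> null_sets lebesgue"
      using negligible_frontier_interval negligible_iff_null_sets by blast
    then show "AE y in lebesgue. G y * indicator (box a (a + l *\<^sub>R One)) y
        = G y * indicator (cbox a (a + l *\<^sub>R One)) y"
      by (rule AE_not_in[THEN eventually_mono]) (use box_subset_cbox in \<open>auto simp: indicator_def\<close>)
  qed
  finally show ?thesis by (simp add: A_def)
qed

text \<open>The cube \<open>Q'\<close> is the image of \<open>Q\<close> under the homothety with ratio \<open>1 - \<mu>\<close> centred at a point
  \<open>z\<close> near \<open>x\<close> (so \<open>Q' \<subseteq> \<Omega>\<close> by convexity) chosen such that \<open>x\<close> is mapped to \<open>y\<close>.\<close>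
lemma shrunken_cube_through:
  fixes x y a :: "'a::euclidean_space"
  assumes cvx: "convex \<Omega>" and Q: "cbox a (a + l *\<^sub>R One) \<subseteq> \<Omega>" "x \<in> cbox a (a + l *\<^sub>R One)"
    and \<rho>: "ball x \<rho> \<subseteq> \<Omega>" and \<delta>: "0 < \<delta>" "\<delta> \<le> l"
    and y: "dist x y < min (\<delta>/2) (\<delta> * \<rho> / (2*l))"
  obtains Q' where "is_cube Q'" "Q' \<subseteq> \<Omega>" "y \<in> Q'" "cbox (a + \<delta> *\<^sub>R One) (a + (l - \<delta>) *\<^sub>R One) \<subseteq> Q'"
    "emeasure lebesgue Q' \<le> emeasure lebesgue (cbox a (a + l *\<^sub>R One))"
proof -
  define \<mu> where "\<mu> = \<delta> / (2*l)"
  have l: "l > 0" using \<delta> by linarith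
  have \<mu>: "0 < \<mu>" "\<mu> < 1" "\<mu> * l = \<delta> / 2" using \<delta> l by (auto simp: \<mu>_def field_simps)
  define z where "z = x + (1/\<mu>) *\<^sub>R (y - x)"
  have "dist x z = dist x y / \<mu>" using \<mu> by (simp add: z_def dist_norm norm_minus_commute)
  also have "\<dots> < \<rho>"
  proof -
    have "dist x y < \<mu> * \<rho>" using y by (simp add: \<mu>_def)
    then show ?thesis using \<mu>(1) by (simp add: pos_divide_less_eq mult.commute)
  qed
  finally have z: "z \<in> \<Omega>" using \<rho> by auto
  define \<phi> where "\<phi> = (\<lambda>q. (1 - \<mu>) *\<^sub>R q + \<mu> *\<^sub>R z)"
  define c where "c = (1 - \<mu>) *\<^sub>R a + \<mu> *\<^sub>R z"
  define Q' where "Q' = cbox c (c + ((1 - \<mu>) * l) *\<^sub>R One)"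
  have "cbox a (a + l *\<^sub>R One) \<noteq> {}" using Q(2) by auto
  then have "\<phi> ` cbox a (a + l *\<^sub>R One) = cbox c ((1 - \<mu>) *\<^sub>R (a + l *\<^sub>R One) + \<mu> *\<^sub>R z)"
    unfolding \<phi>_def image_affinity_cbox c_def using \<mu> by simp
  also have "(1 - \<mu>) *\<^sub>R (a + l *\<^sub>R One) + \<mu> *\<^sub>R z = c + ((1 - \<mu>) * l) *\<^sub>R One"
    by (simp add: c_def algebra_simps)
  finally have image: "\<phi> ` cbox a (a + l *\<^sub>R One) = Q'" by (simp add: Q'_def)
  have c: "c \<bullet> b = a \<bullet> b + \<mu> * (x \<bullet> b - a \<bullet> b) + (y \<bullet> b - x \<bullet> b)" for b
    using \<mu> by (simp add: c_def z_def algebra_simps inner_add_left inner_diff_left)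
  show ?thesis
  proof
    show "is_cube Q'"
      unfolding is_cube_def Q'_def using \<mu> l by (intro exI[of _ c] exI[of _ "(1 - \<mu>) * l"]) simp
    show "Q' \<subseteq> \<Omega>"
      unfolding image[symmetric] \<phi>_def using Q(1) z \<mu> by (auto intro: convexD[OF cvx])
    have "\<phi> x = y" using \<mu> by (simp add: \<phi>_def z_def algebra_simps)
    then show "y \<in> Q'" using image Q(2) by blast
    show "cbox (a + \<delta> *\<^sub>R One) (a + (l - \<delta>) *\<^sub>R One) \<subseteq> Q'"
    unfolding Q'_def proof (rule subset_box_imp, intro ballI conjI)
      fix b :: 'a assume b: "b \<in> Basis"
      have "\<bar>y \<bullet> b - x \<bullet> b\<bar> \<le> dist x y"
        using Basis_le_norm[OF b, of "y - x"] by (simp add: dist_norm norm_minus_commute inner_diff_left)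
      then have yx: "y \<bullet> b - x \<bullet> b \<le> \<delta> / 2" "x \<bullet> b - y \<bullet> b \<le> \<delta> / 2" using y by auto
      have xb: "a \<bullet> b \<le> x \<bullet> b" "x \<bullet> b \<le> a \<bullet> b + l"
        using Q(2) b by (auto simp: mem_box inner_add_left)
      then have "\<mu> * (x \<bullet> b - a \<bullet> b) \<le> \<mu> * l" "0 \<le> \<mu> * (x \<bullet> b - a \<bullet> b)"
        using \<mu>(1) by (auto intro!: mult_left_mono)
      moreover have "(1 - \<mu>) * l = l - \<mu> * l" by (simp add: algebra_simps)
      ultimately have "c \<bullet> b \<le> a \<bullet> b + \<delta>" "a \<bullet> b + (l - \<delta>) \<le> c \<bullet> b + (1 - \<mu>) * l"
        using c[of b] yx \<mu>(3) by linarith+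
      then show "c \<bullet> b \<le> (a + \<delta> *\<^sub>R One) \<bullet> b"
        "(a + (l - \<delta>) *\<^sub>R One) \<bullet> b \<le> (c + ((1 - \<mu>) * l) *\<^sub>R One) \<bullet> b"
        using b by (simp_all add: inner_add_left)
    qed
    have "((1 - \<mu>) * l) ^ DIM('a) \<le> l ^ DIM('a)"
      using \<mu> l by (intro power_mono) (auto simp: mult_le_cancel_right1)
    moreover have "emeasure lebesgue Q' = ennreal (((1 - \<mu>) * l) ^ DIM('a))"
      unfolding Q'_def using \<mu> l by (intro emeasure_cbox_One) simp
    moreover have "emeasure lebesgue (cbox a (a + l *\<^sub>R One)) = ennreal (l ^ DIM('a))"
      using l by (intro emeasure_cbox_One) simp
    ultimately show "emeasure lebesgue Q' \<le> emeasure lebesgue (cbox a (a + l *\<^sub>R One))"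
      by (simp only: ennreal_leI)
  qed
qed

text \<open>Lower semicontinuity of the maximal function in the interior of \<open>\<Omega>\<close>: the cube average above
  \<open>t\<close> is already witnessed by an inner subcube, and every nearby point lies in a slightly
  shrunken copy of the cube that still contains this subcube.\<close>
lemma maxfun_gt_on_ball:
  fixes \<Omega> :: "'a::euclidean_space set" and g :: "'a \<Rightarrow> real"
  assumes \<Omega>: "\<Omega> = UNIV \<or> is_cube \<Omega>" and g: "g \<in> borel_measurable (restrict_space lebesgue \<Omega>)"
    and x: "x \<in> interior \<Omega>" and t: "t < maxfun \<Omega> g x"
  obtains \<epsilon> where "\<epsilon> > 0" "\<And>y. y \<in> ball x \<epsilon> \<Longrightarrow> t < maxfun \<Omega> g y"
proof -
  obtain Q where Q: "is_cube Q" "Q \<subseteq> \<Omega>" "x \<in> Q"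
    and tQ: "t < (\<integral>\<^sup>+ y\<in>Q. ennreal \<bar>g y\<bar> \<partial>lebesgue) / emeasure lebesgue Q"
    using t unfolding maxfun_def less_SUP_iff by blast
  obtain a l where al: "l > 0" "Q = cbox a (a + l *\<^sub>R One)" using Q(1) unfolding is_cube_def by auto
  define G where "G y = ennreal \<bar>indicator \<Omega> y * g y\<bar>" for y
  have G: "G \<in> borel_measurable lebesgue"
    unfolding G_def using borel_measurable_indicator_mult[OF domain_sets_lebesgue[OF \<Omega>] g] by measurable
  have int_G: "(\<integral>\<^sup>+ y\<in>S. ennreal \<bar>g y\<bar> \<partial>lebesgue) = (\<integral>\<^sup>+ y\<in>S. G y \<partial>lebesgue)" if "S \<subseteq> \<Omega>" for S
    using set_nn_integral_indicator_mult[OF that, of lebesgue abs g] by (simp add: G_def)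
  have "t * emeasure lebesgue Q < (\<integral>\<^sup>+ y\<in>Q. G y \<partial>lebesgue)"
    using tQ int_G[OF Q(2)] is_cube_emeasure[OF Q(1)] by (simp add: divide_le_iff_ennreal flip: not_le)
  then obtain n where n: "t * emeasure lebesgue Q <
      (\<integral>\<^sup>+ y \<in> cbox (a + (l / (real n + 2)) *\<^sub>R One) (a + (l - l / (real n + 2)) *\<^sub>R One). G y \<partial>lebesgue)"
    unfolding al(2) SUP_set_nn_integral_inner_cubes[OF G al(1), of a, symmetric] less_SUP_iff by blast
  define \<delta> where "\<delta> = l / (real n + 2)"
  have \<delta>: "0 < \<delta>" "\<delta> \<le> l" using al(1) by (auto simp: \<delta>_def field_simps)
  obtain \<rho> where \<rho>: "\<rho> > 0" "ball x \<rho> \<subseteq> \<Omega>"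
    using x by (meson interior_subset open_contains_ball open_interior subset_trans)
  show ?thesis
  proof
    show "min (\<delta>/2) (\<delta> * \<rho> / (2*l)) > 0" using \<delta> \<rho> al by simp
    fix y assume "y \<in> ball x (min (\<delta>/2) (\<delta> * \<rho> / (2*l)))"
    then obtain Q' where Q': "is_cube Q'" "Q' \<subseteq> \<Omega>" "y \<in> Q'"
      "cbox (a + \<delta> *\<^sub>R One) (a + (l - \<delta>) *\<^sub>R One) \<subseteq> Q'" "emeasure lebesgue Q' \<le> emeasure lebesgue Q"
      using shrunken_cube_through[OF domain_convex[OF \<Omega>] _ _ \<rho>(2) \<delta>] Q al(2) by auto
    have "t * emeasure lebesgue Q' \<le> t * emeasure lebesgue Q" using Q'(5) by (rule mult_left_mono) simp
    also have "\<dots> < (\<integral>\<^sup>+ y \<in> cbox (a + \<delta> *\<^sub>R One) (a + (l - \<delta>) *\<^sub>R One). G y \<partial>lebesgue)"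
      using n by (simp add: \<delta>_def)
    also have "\<dots> \<le> (\<integral>\<^sup>+ y\<in>Q'. G y \<partial>lebesgue)"
      using Q'(4) by (intro nn_integral_mono) (auto simp: indicator_def)
    finally have "t < (\<integral>\<^sup>+ y\<in>Q'. ennreal \<bar>g y\<bar> \<partial>lebesgue) / emeasure lebesgue Q'"
      using int_G[OF Q'(2)] is_cube_emeasure[OF Q'(1)] by (simp add: divide_le_iff_ennreal flip: not_le)
    also have "\<dots> \<le> maxfun \<Omega> g y" using Q'(1-3) by (rule cube_average_le_maxfun)
    finally show "t < maxfun \<Omega> g y" .
  qed
qed

lemma borel_measurable_enn2real_maxfun:
  fixes \<Omega> :: "'a::euclidean_space set" and g :: "'a \<Rightarrow> real"
  assumes \<Omega>: "\<Omega> = UNIV \<or> is_cube \<Omega>" and g: "g \<in> borel_measurable (restrict_space lebesgue \<Omega>)"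
  shows "(\<lambda>x. enn2real (maxfun \<Omega> g x)) \<in> borel_measurable (restrict_space lebesgue \<Omega>)"
proof -
  define G where "G x = (if x \<in> interior \<Omega> then maxfun \<Omega> g x else 0)" for x
  have "G \<in> borel_measurable borel"
  proof (rule borel_measurableI_greater)
    fix t :: ennreal
    have "open {x \<in> interior \<Omega>. t < maxfun \<Omega> g x}"
      unfolding open_contains_ball
    proof
      fix x assume x: "x \<in> {x \<in> interior \<Omega>. t < maxfun \<Omega> g x}"
      obtain \<epsilon> where \<epsilon>: "\<epsilon> > 0" "\<And>y. y \<in> ball x \<epsilon> \<Longrightarrow> t < maxfun \<Omega> g y"
        using maxfun_gt_on_ball[OF \<Omega> g, of x t] x by blast
      obtain \<rho> where \<rho>: "\<rho> > 0" "ball x \<rho> \<subseteq> interior \<Omega>"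
        using x open_interior open_contains_ball by blast
      show "\<exists>e>0. ball x e \<subseteq> {x \<in> interior \<Omega>. t < maxfun \<Omega> g x}"
        using \<epsilon> \<rho> by (intro exI[of _ "min \<epsilon> \<rho>"]) auto
    qed
    moreover have "{x \<in> space borel. t < G x} = {x \<in> interior \<Omega>. t < maxfun \<Omega> g x}"
      by (auto simp: G_def)
    ultimately show "{x \<in> space borel. t < G x} \<in> sets borel" by simp
  qed
  then have "(\<lambda>x. enn2real (G x)) \<in> borel_measurable lebesgue"
    by (intro borel_measurable_enn2real measurable_completion) simp
  moreover have "AE x in lebesgue. x \<notin> \<Omega> - interior \<Omega>"
    using domain_negligible_boundary[OF \<Omega>] by (intro AE_not_in) (simp add: negligible_iff_null_sets)
  then have "AE x in lebesgue. enn2real (G x) = indicator \<Omega> x *\<^sub>R enn2real (maxfun \<Omega> g x)"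
    by eventually_elim (use interior_subset in \<open>auto simp: G_def indicator_def\<close>)
  ultimately have "(\<lambda>x. indicator \<Omega> x *\<^sub>R enn2real (maxfun \<Omega> g x)) \<in> borel_measurable lebesgue"
    by (rule borel_measurable_AE)
  then show ?thesis
    using borel_measurable_restrict_space_iff[of \<Omega> lebesgue "\<lambda>x. enn2real (maxfun \<Omega> g x)"]
      domain_sets_lebesgue[OF \<Omega>] by simp
qed

lemma MA1_iff_abs_powr:
  assumes "f \<in> borel_measurable (restrict_space lebesgue \<Omega>)"
  shows "MA1 r \<Omega> f \<longleftrightarrow> MA1 1 \<Omega> (\<lambda>x. \<bar>f x\<bar> powr r)"
  using assms unfolding MA1_def by auto

lemma MA1_imp_MA1_ext_maxfun:
  fixes \<Omega> :: "'a::euclidean_space set" and g :: "'a \<Rightarrow> real"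
  assumes \<Omega>: "\<Omega> = UNIV \<or> is_cube \<Omega>" and g: "MA1 1 \<Omega> g"
  shows "MA1_ext 1 \<Omega> (maxfun \<Omega> g)"
proof -
  obtain w where w: "w \<in> A1 \<Omega>" and gw: "AE x in lebesgue. x \<in> \<Omega> \<longrightarrow> \<bar>g x\<bar> \<le> w x"
    using g unfolding MA1_def by auto
  obtain C :: real where C: "AE x in lebesgue. x \<in> \<Omega> \<longrightarrow> maxfun \<Omega> w x \<le> ennreal C * ennreal (w x)"
    using w unfolding A1_def by auto
  have pos: "AE x in lebesgue. x \<in> \<Omega> \<longrightarrow> w x > 0" using w unfolding A1_def weight_def by auto
  define c where "c = max C 1"
  have c: "c > 0" "C \<le> c" by (auto simp: c_def)
  have gw': "AE y in lebesgue. y \<in> \<Omega> \<longrightarrow> \<bar>g y\<bar> \<le> \<bar>w y\<bar>"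
    using gw by eventually_elim auto
  have bound: "AE x in lebesgue. x \<in> \<Omega> \<longrightarrow> maxfun \<Omega> g x \<le> ennreal (c * w x)"
    using C pos
  proof eventually_elim
    case (elim x)
    show ?case
    proof
      assume x: "x \<in> \<Omega>"
      have "maxfun \<Omega> g x \<le> maxfun \<Omega> w x" using gw' by (rule maxfun_mono_AE)
      also have "\<dots> \<le> ennreal C * ennreal (w x)" using elim x by auto
      also have "\<dots> \<le> ennreal c * ennreal (w x)" using c by (intro mult_right_mono ennreal_leI) auto
      also have "\<dots> = ennreal (c * w x)" using c elim x by (simp add: ennreal_mult)
      finally show "maxfun \<Omega> g x \<le> ennreal (c * w x)" .
    qed
  qed
  show ?thesis unfolding MA1_ext_def MA1_def
  proof (intro conjI bexI[of _ "\<lambda>x. c * w x"])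
    show "AE x in lebesgue. x \<in> \<Omega> \<longrightarrow> maxfun \<Omega> g x < \<infinity>"
      using bound by eventually_elim (auto intro: le_less_trans)
    show "(\<lambda>x. enn2real (maxfun \<Omega> g x)) \<in> borel_measurable (restrict_space lebesgue \<Omega>)"
      using \<Omega> g unfolding MA1_def by (blast intro: borel_measurable_enn2real_maxfun)
    show "(\<lambda>x. c * w x) \<in> A1 \<Omega>" using w c(1) by (rule A1_cmult)
    show "AE x in lebesgue. x \<in> \<Omega> \<longrightarrow> \<bar>enn2real (maxfun \<Omega> g x)\<bar> powr 1 \<le> c * w x"
      using bound pos by eventually_elim (use c in \<open>auto intro!: enn2real_leI\<close>)
  qed
qed

lemma MA1_ext_maxfun_imp_MA1:
  fixes \<Omega> :: "'a::euclidean_space set" and f :: "'a \<Rightarrow> real"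
  assumes \<Omega>: "\<Omega> = UNIV \<or> is_cube \<Omega>" and f: "f \<in> borel_measurable (restrict_space lebesgue \<Omega>)"
    and r: "r \<ge> 0" and Mf: "MA1_ext r \<Omega> (maxfun \<Omega> f)"
  shows "MA1 r \<Omega> f"
proof -
  obtain w where w: "w \<in> A1 \<Omega>"
    and Mfw: "AE x in lebesgue. x \<in> \<Omega> \<longrightarrow> \<bar>enn2real (maxfun \<Omega> f x)\<bar> powr r \<le> w x"
    using Mf unfolding MA1_ext_def MA1_def by blast
  have fin: "AE x in lebesgue. x \<in> \<Omega> \<longrightarrow> maxfun \<Omega> f x < \<infinity>"
    using Mf unfolding MA1_ext_def by blast
  have "AE x in lebesgue. x \<in> \<Omega> \<longrightarrow> \<bar>f x\<bar> powr r \<le> w x"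
    using Mfw abs_le_maxfun_AE[OF \<Omega> f] fin
  proof eventually_elim
    case (elim x)
    show ?case
    proof
      assume x: "x \<in> \<Omega>"
      have "\<bar>f x\<bar> \<le> enn2real (maxfun \<Omega> f x)"
        using enn2real_mono[of "ennreal \<bar>f x\<bar>" "maxfun \<Omega> f x"] elim x by simp
      then have "\<bar>f x\<bar> powr r \<le> enn2real (maxfun \<Omega> f x) powr r" using r by (intro powr_mono2) auto
      also have "\<dots> \<le> w x" using elim x by simp
      finally show "\<bar>f x\<bar> powr r \<le> w x" .
    qed
  qed
  then show ?thesis unfolding MA1_def using f w by blast
qed

lemma MA1_ext_maxfun_powr_imp_MA1_ext_maxfun:
  fixes \<Omega> :: "'a::euclidean_space set" and f :: "'a \<Rightarrow> real"
  assumes \<Omega>: "\<Omega> = UNIV \<or> is_cube \<Omega>" and f: "f \<in> borel_measurable (restrict_space lebesgue \<Omega>)"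
    and r: "r \<ge> 1" and Mh: "MA1_ext 1 \<Omega> (maxfun \<Omega> (\<lambda>x. \<bar>f x\<bar> powr r))"
  shows "MA1_ext r \<Omega> (maxfun \<Omega> f)"
proof -
  obtain w where w: "w \<in> A1 \<Omega>"
    and Mhw: "AE x in lebesgue. x \<in> \<Omega> \<longrightarrow> \<bar>enn2real (maxfun \<Omega> (\<lambda>x. \<bar>f x\<bar> powr r) x)\<bar> powr 1 \<le> w x"
    using Mh unfolding MA1_ext_def MA1_def by blast
  have fin: "AE x in lebesgue. x \<in> \<Omega> \<longrightarrow> maxfun \<Omega> (\<lambda>x. \<bar>f x\<bar> powr r) x < \<infinity>"
    using Mh unfolding MA1_ext_def by blast
  have bound: "AE x in lebesgue. x \<in> \<Omega> \<longrightarrow>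
      maxfun \<Omega> f x < \<infinity> \<and> \<bar>enn2real (maxfun \<Omega> f x)\<bar> powr r \<le> w x"
    using Mhw fin
  proof eventually_elim
    case (elim x)
    show ?case
    proof
      assume x: "x \<in> \<Omega>"
      define m where "m = enn2real (maxfun \<Omega> (\<lambda>x. \<bar>f x\<bar> powr r) x)"
      have m: "maxfun \<Omega> (\<lambda>x. \<bar>f x\<bar> powr r) x = ennreal m" "m \<ge> 0" "m \<le> w x"
        using elim x by (auto simp: m_def ennreal_enn2real_if)
      have Mf: "maxfun \<Omega> f x \<le> ennreal (m powr (1/r))"
        using domain_sets_lebesgue[OF \<Omega>] f r m(1,2) by (rule maxfun_le_root_maxfun_powr)
      then have "enn2real (maxfun \<Omega> f x) powr r \<le> (m powr (1/r)) powr r"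
        using r by (intro powr_mono2 enn2real_leI) auto
      also have "\<dots> = m" using m(2) r by (simp add: powr_powr)
      finally show "maxfun \<Omega> f x < \<infinity> \<and> \<bar>enn2real (maxfun \<Omega> f x)\<bar> powr r \<le> w x"
        using Mf m(3) by (auto intro: le_less_trans)
    qed
  qed
  show ?thesis unfolding MA1_ext_def MA1_def
  proof (intro conjI bexI[of _ w])
    show "AE x in lebesgue. x \<in> \<Omega> \<longrightarrow> maxfun \<Omega> f x < \<infinity>"
      using bound by eventually_elim auto
    show "(\<lambda>x. enn2real (maxfun \<Omega> f x)) \<in> borel_measurable (restrict_space lebesgue \<Omega>)"
      using \<Omega> f by (rule borel_measurable_enn2real_maxfun)
    show "AE x in lebesgue. x \<in> \<Omega> \<longrightarrow> \<bar>enn2real (maxfun \<Omega> f x)\<bar> powr r \<le> w x"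
      using bound by eventually_elim auto
  qed (rule w)
qed

theorem mainTheorem15:
  fixes \<Omega> :: "'a::euclidean_space set" and f :: "'a \<Rightarrow> real" and r :: real
  assumes "\<Omega> = UNIV \<or> is_cube \<Omega>"
    and "r \<ge> 1"
    and "f \<in> borel_measurable (restrict_space lebesgue \<Omega>)"
  shows "(MA1 r \<Omega> f \<longleftrightarrow> MA1_ext 1 \<Omega> (maxfun \<Omega> (\<lambda>x. \<bar>f x\<bar> powr r)))
       \<and> (MA1_ext 1 \<Omega> (maxfun \<Omega> (\<lambda>x. \<bar>f x\<bar> powr r)) \<longleftrightarrow> MA1_ext r \<Omega> (maxfun \<Omega> f))"
proof -
  note \<Omega> = assms(1) and r = assms(2) and f = assms(3)
  have h: "(\<lambda>x. \<bar>f x\<bar> powr r) \<in> borel_measurable (restrict_space lebesgue \<Omega>)"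
    using f by measurable
  have "MA1 r \<Omega> f \<longleftrightarrow> MA1_ext 1 \<Omega> (maxfun \<Omega> (\<lambda>x. \<bar>f x\<bar> powr r))"
    unfolding MA1_iff_abs_powr[OF f]
    using MA1_imp_MA1_ext_maxfun[OF \<Omega>] MA1_ext_maxfun_imp_MA1[OF \<Omega> h] by auto
  moreover have "MA1_ext r \<Omega> (maxfun \<Omega> f) \<Longrightarrow> MA1 r \<Omega> f"
    using MA1_ext_maxfun_imp_MA1[OF \<Omega> f] r by simp
  ultimately show ?thesis
    using MA1_ext_maxfun_powr_imp_MA1_ext_maxfun[OF \<Omega> f r] by blast
qed

end
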